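(* For every $q\ge3$ the functions $c_q$ and $s_q$ extend holomorphically to the complex strip $\Sigma_q=\{z\in\mathbb{C}:|\mathrm{Im}\,z|<\rho_{k_q}\}$, where $\rho_{k_q}=\mathrm{arcosh}(1/k_q)$. This extension is maximal: the extended functions have (ramification) singularities at the points $\frac\pi2+\pi n\pm i\rho_{k_q}$, $n\in\mathbb{Z}$.
   Context: Ellipse with semi-axes $0<b\le a$, eccentricity $e_0=\sqrt{1-b^2/a^2}$ with $0<e_0<1$. For $0\le k<1$, $F(z;k)=\int_0^z(1-k^2\sin^2\zeta)^{-1/2}d\zeta$ and $K(k)=F(\pi/2;k)$. For $\lambda\in(0,b)$, $k_\lambda=\sqrt{(a^2-b^2)/(a^2-\lambda^2)}$, $\omega_\lambda=F(\arcsin(\lambda/b);k_\lambda)/(2K(k_\lambda))$ (strictly increasing from $0$ to $1/2$); for $q\ge3$, $\lambda_q$ satisfies $\omega_{\lambda_q}=1/q$ and $k_q=k_{\lambda_q}\in(e_0,1)$. $c_q(z)=\cos\!\big(\tfrac{2\pi q}{4K(k_q)}F(z;k_q)\big)/\sqrt{1-k_q^2\sin^2z}$, $s_q(z)=\sin\!\big(\tfrac{2\pi q}{4K(k_q)}F(z;k_q)\big)/\sqrt{1-k_q^2\sin^2z}$. *)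

theory Defs
  imports "HOL-Complex_Analysis.Complex_Analysis"
begin

definition ellF :: "real \<Rightarrow> real \<Rightarrow> real" where
  "ellF k z =
     (if 0 \<le> z then integral {0..z} (\<lambda>t. 1 / sqrt (1 - k\<^sup>2 * (sin t)\<^sup>2))
      else - integral {z..0} (\<lambda>t. 1 / sqrt (1 - k\<^sup>2 * (sin t)\<^sup>2)))"

definition ellK :: "real \<Rightarrow> real" where
  "ellK k = ellF k (pi / 2)"

text \<open>k_lambda and omega_lambda for the ellipse with semi-axes a, b.\<close>
definition k_lam :: "real \<Rightarrow> real \<Rightarrow> real \<Rightarrow> real" where
  "k_lam a b lam = sqrt ((a\<^sup>2 - b\<^sup>2) / (a\<^sup>2 - lam\<^sup>2))"

definition omega :: "real \<Rightarrow> real \<Rightarrow> real \<Rightarrow> real" where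
  "omega a b lam = ellF (k_lam a b lam) (arcsin (lam / b)) / (2 * ellK (k_lam a b lam))"

definition cq :: "real \<Rightarrow> nat \<Rightarrow> real \<Rightarrow> real" where
  "cq k q z = cos (2 * pi * real q / (4 * ellK k) * ellF k z) / sqrt (1 - k\<^sup>2 * (sin z)\<^sup>2)"

definition sq :: "real \<Rightarrow> nat \<Rightarrow> real \<Rightarrow> real" where
  "sq k q z = sin (2 * pi * real q / (4 * ellK k) * ellF k z) / sqrt (1 - k\<^sup>2 * (sin z)\<^sup>2)"

definition rho :: "real \<Rightarrow> real" where
  "rho k = arcosh (1 / k)"

definition strip :: "real \<Rightarrow> complex set" where
  "strip r = {z. \<bar>Im z\<bar> < r}"

end

theory Submission
  imports Defs
begin

(* On the strip |Im z| < arcosh(1/k) the radicand 1 - k^2 sin^2 z avoids the closed negative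
   real axis, so the integrand of F and with it c_q and s_q continue holomorphically to the strip.
   At p = pi/2 + pi n \<plusminus> i arcosh(1/k) the radicand has a simple zero. In the variable w with
   z = p + w^2, F becomes holomorphic at w = 0 and the square root becomes w S(w) with S(0) \<noteq> 0.
   An isolated singularity of T(aF)/sqrt (T = cos, sin) at p would make T(aF(p + w^2))/(w S(w))
   even in w, forcing T(aF(p)) = 0 and hence F(p) real; but Im F increases strictly along the
   vertical segment from pi/2 + pi n to p. *)

lemma entire_simple_zero_factor:
  fixes f :: "complex \<Rightarrow> complex"
  assumes "f holomorphic_on UNIV" "f p = 0" "deriv f p \<noteq> 0"
  obtains V where "V holomorphic_on UNIV" "V 0 \<noteq> 0" "\<And>u. f (p + u) = u * V u"
proof -
  define g where "g u = f (p + u)" for u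
  have "(f has_field_derivative deriv f p) (at (p + 0))"
    using assms(1) by (simp add: holomorphic_derivI)
  moreover have "((\<lambda>u. p + u) has_field_derivative 1) (at 0)"
    by (auto intro!: derivative_eq_intros)
  ultimately have "(g has_field_derivative deriv f p) (at 0)"
    unfolding g_def using DERIV_chain2[where f = f and g = "\<lambda>u. p + u"] by fastforce
  then have deriv_g: "deriv g 0 = deriv f p" by (rule DERIV_imp_deriv)
  have "(\<lambda>u. p + u) holomorphic_on UNIV" by (intro holomorphic_intros)
  from holomorphic_on_compose_gen[OF this assms(1)]
  have "g holomorphic_on UNIV" by (simp add: g_def[abs_def] o_def)
  define V where "V u = (if u = 0 then deriv g 0 else (g u - g 0) / (u - 0))" for u
  have "V holomorphic_on UNIV"
    using pole_lemma[OF \<open>g holomorphic_on UNIV\<close>, of 0] by (simp add: V_def[abs_def])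
  moreover have "V 0 \<noteq> 0" using deriv_g assms(3) by (simp add: V_def)
  moreover have "f (p + u) = u * V u" for u using assms(2) by (simp add: V_def g_def)
  ultimately show ?thesis by (rule that)
qed

lemma entire_simple_zero_square_root:
  fixes f :: "complex \<Rightarrow> complex"
  assumes "f holomorphic_on UNIV" "f p = 0" "deriv f p \<noteq> 0"
  obtains \<delta> S where "0 < \<delta>" "S holomorphic_on ball 0 \<delta>"
    "\<And>w. w \<in> ball 0 \<delta> \<Longrightarrow> S w \<noteq> 0 \<and> f (p + w\<^sup>2) = (w * S w)\<^sup>2"
proof -
  obtain V where V: "V holomorphic_on UNIV" "V 0 \<noteq> 0" "\<And>u. f (p + u) = u * V u"
    using entire_simple_zero_factor[OF assms] by blast
  have "isCont V 0"
    using holomorphic_on_imp_continuous_on[OF V(1)] continuous_on_eq_continuous_at[OF open_UNIV] by blast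
  then obtain \<delta>\<^sub>V where "0 < \<delta>\<^sub>V" and V_nonzero: "\<And>u. norm u < \<delta>\<^sub>V \<Longrightarrow> V u \<noteq> 0"
    using continuous_at_avoid[of 0 V] V(2) by (auto simp: dist_norm)
  define \<delta> where "\<delta> = sqrt \<delta>\<^sub>V"
  have V_sq_nonzero: "V (w\<^sup>2) \<noteq> 0" if "w \<in> ball 0 \<delta>" for w
  proof -
    have "norm w ^ 2 < \<delta>\<^sup>2" using that by (simp add: power_strict_mono)
    with \<open>0 < \<delta>\<^sub>V\<close> V_nonzero show ?thesis by (simp add: \<delta>_def norm_power)
  qed
  have "(\<lambda>w. w\<^sup>2) holomorphic_on ball 0 \<delta>" by (intro holomorphic_intros)
  from holomorphic_on_compose_gen[OF this V(1)]
  have "(\<lambda>w. V (w\<^sup>2)) holomorphic_on ball 0 \<delta>" by (simp add: o_def)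
  then obtain S where S: "S holomorphic_on ball 0 \<delta>" "\<And>w. w \<in> ball 0 \<delta> \<Longrightarrow> V (w\<^sup>2) = (S w)\<^sup>2"
    using contractible_imp_holomorphic_sqrt[OF _ convex_imp_contractible] V_sq_nonzero by blast
  show ?thesis
  proof (rule that[OF _ S(1)])
    show "0 < \<delta>" using \<open>0 < \<delta>\<^sub>V\<close> by (simp add: \<delta>_def)
    fix w :: complex assume "w \<in> ball 0 \<delta>"
    with V_sq_nonzero S(2) show "S w \<noteq> 0 \<and> f (p + w\<^sup>2) = (w * S w)\<^sup>2"
      by (auto simp: V(3) power_mult_distrib)
  qed
qed

lemma continuous_square_eq_1_constant:
  fixes q :: "'a::topological_space \<Rightarrow> complex"
  assumes "connected W" "continuous_on W q" "\<And>w. w \<in> W \<Longrightarrow> (q w)\<^sup>2 = 1"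
  obtains \<epsilon> where "\<epsilon> \<in> {-1, 1}" "\<And>w. w \<in> W \<Longrightarrow> q w = \<epsilon>"
proof (cases "W = {}")
  case False
  then obtain w\<^sub>0 where "w\<^sub>0 \<in> W" by blast
  have "q ` W \<subseteq> {-1, 1}" using assms(3) by (auto simp: power2_eq_1_iff)
  then have "q constant_on W"
    using assms(1,2) by (intro continuous_finite_range_constant) (auto intro: finite_subset)
  then have "\<And>w. w \<in> W \<Longrightarrow> q w = q w\<^sub>0"
    using \<open>w\<^sub>0 \<in> W\<close> by (auto simp: constant_on_def)
  with that \<open>q ` W \<subseteq> {-1, 1}\<close> \<open>w\<^sub>0 \<in> W\<close> show ?thesis by blast
qed (use that in auto)

lemma holomorphic_primitive_extends:
  fixes \<phi> \<psi> :: "complex \<Rightarrow> complex"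
  assumes "\<psi> holomorphic_on E" "open E" "convex E" "convex W" "W \<subseteq> E"
    and "\<And>w. w \<in> W \<Longrightarrow> (\<phi> has_field_derivative \<psi> w) (at w)"
  obtains \<Phi> where "\<Phi> holomorphic_on E" "\<And>w. w \<in> W \<Longrightarrow> \<Phi> w = \<phi> w"
proof -
  obtain G where G_within: "\<And>w. w \<in> E \<Longrightarrow> (G has_field_derivative \<psi> w) (at w within E)"
    using holomorphic_convex_primitive'[OF assms(3,2,1)] by blast
  have G: "(G has_field_derivative \<psi> w) (at w)" if "w \<in> E" for w
    using G_within[OF that] at_within_open[OF that assms(2)] by simp
  have "\<exists>c. \<forall>w\<in>W. \<phi> w - G w = c"
  proof (rule has_field_derivative_zero_constant[OF assms(4)])
    fix w assume "w \<in> W"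
    with assms(5,6) G have "((\<lambda>w. \<phi> w - G w) has_field_derivative \<psi> w - \<psi> w) (at w)"
      by (intro DERIV_diff) auto
    then show "((\<lambda>w. \<phi> w - G w) has_field_derivative 0) (at w within W)"
      by (simp add: has_field_derivative_at_within)
  qed
  then obtain c where c: "\<And>w. w \<in> W \<Longrightarrow> \<phi> w - G w = c" by blast
  have "G holomorphic_on E"
    using G by (auto simp: holomorphic_on_open[OF assms(2)])
  then have "(\<lambda>w. G w + c) holomorphic_on E" by (intro holomorphic_intros)
  then show ?thesis
    using c by (intro that[of "\<lambda>w. G w + c"]) (auto simp: algebra_simps)
qed

lemma even_quotient_numerator_vanishes:
  fixes A B :: "complex \<Rightarrow> complex"
  assumes "isCont A 0" "isCont B 0" "0 < \<delta>" and B: "\<And>w. norm w < \<delta> \<Longrightarrow> B w \<noteq> 0"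
    and even: "\<And>w. w \<noteq> 0 \<Longrightarrow> norm w < \<delta> \<Longrightarrow> A w / (w * B w) = A (-w) / (-w * B (-w))"
  shows "A 0 = 0"
proof -
  define Z where "Z w = A w * B (-w) + A (-w) * B w" for w
  have "isCont (\<lambda>w. A (- w)) 0" "isCont (\<lambda>w. B (- w)) 0"
    using assms(1,2) by (auto intro!: isCont_o2[where f = "\<lambda>w. - w"] continuous_intros)
  then have "isCont Z 0"
    unfolding Z_def using assms(1,2) by (intro continuous_intros)
  then have "(Z \<longlongrightarrow> Z 0) (at 0)" by (simp add: isCont_def)
  moreover have "\<forall>\<^sub>F w in at 0. Z w = 0"
    using eventually_at_ball'[OF assms(3), of 0 UNIV]
  proof eventually_elim
    case (elim w)
    then have "w \<noteq> 0" "norm w < \<delta>" by auto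
    moreover have "w * B w \<noteq> 0" "- w * B (- w) \<noteq> 0"
      using \<open>w \<noteq> 0\<close> \<open>norm w < \<delta>\<close> B[of w] B[of "-w"] by auto
    ultimately have "A w * (- w * B (- w)) = A (- w) * (w * B w)"
      using even[of w] frac_eq_eq by metis
    then have "w * Z w = 0" unfolding Z_def by algebra
    with \<open>w \<noteq> 0\<close> show "Z w = 0" by simp
  qed
  then have "(Z \<longlongrightarrow> 0) (at 0)" by (rule tendsto_eventually)
  ultimately have "Z 0 = 0" by (rule LIM_unique)
  moreover have "B 0 \<noteq> 0" using B assms(3) by simp
  ultimately show ?thesis by (simp add: Z_def)
qed

(* A function on a punctured disc at p pulls back under w \<mapsto> p + w^2 to an even function. *)
lemma pullback_by_square_numerator_vanishes:
  fixes A B h :: "complex \<Rightarrow> complex"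
  assumes A: "A holomorphic_on ball 0 \<delta>"
    and B: "B holomorphic_on ball 0 \<delta>" "\<And>w. w \<in> ball 0 \<delta> \<Longrightarrow> B w \<noteq> 0"
    and h: "h holomorphic_on ball p r - {p}" and in_ball: "\<And>w. w \<in> ball 0 \<delta> \<Longrightarrow> p + w\<^sup>2 \<in> ball p r"
    and W: "open W" "W \<noteq> {}" "W \<subseteq> ball 0 \<delta> - {0}"
    and eq: "\<And>w. w \<in> W \<Longrightarrow> A w / (w * B w) = h (p + w\<^sup>2)"
  shows "A 0 = 0"
proof -
  obtain w\<^sub>0 where "w\<^sub>0 \<in> W" using W(2) by blast
  with W(3) have "norm w\<^sub>0 < \<delta>" by auto
  then have "0 < \<delta>" using norm_ge_zero[of w\<^sub>0] by linarith
  have continuation: "A w / (w * B w) = h (p + w\<^sup>2)" if "w \<in> ball 0 \<delta> - {0}" for w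
  proof (rule analytic_continuation_open[where f = "\<lambda>w. A w / (w * B w)" and g = "\<lambda>w. h (p + w\<^sup>2)",
        OF W(1) _ W(2) _ W(3) _ _ eq that])
    show "(\<lambda>w. A w / (w * B w)) holomorphic_on ball 0 \<delta> - {0}"
      using holomorphic_on_subset[OF A, of "ball 0 \<delta> - {0}"] holomorphic_on_subset[OF B(1), of "ball 0 \<delta> - {0}"] B(2)
      by (intro holomorphic_intros) auto
    have "(\<lambda>w. p + w\<^sup>2) ` (ball 0 \<delta> - {0}) \<subseteq> ball p r - {p}"
      using in_ball by auto
    from holomorphic_on_compose_gen[OF _ h this]
    show "(\<lambda>w. h (p + w\<^sup>2)) holomorphic_on ball 0 \<delta> - {0}"
      by (simp add: o_def holomorphic_intros)
    show "open (ball (0::complex) \<delta> - {0})" by (simp add: open_delete)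
    show "connected (ball (0::complex) \<delta> - {0})" by (rule connected_punctured_ball) simp
  qed
  show ?thesis
  proof (rule even_quotient_numerator_vanishes[OF _ _ \<open>0 < \<delta>\<close>])
    show "isCont A 0" "isCont B 0"
      using holomorphic_on_imp_continuous_on[OF A] holomorphic_on_imp_continuous_on[OF B(1)] \<open>0 < \<delta>\<close>
      by (simp_all add: continuous_on_eq_continuous_at)
    show "B w \<noteq> 0" if "norm w < \<delta>" for w using B(2) that by simp
    fix w :: complex assume "w \<noteq> 0" "norm w < \<delta>"
    then show "A w / (w * B w) = A (- w) / (- w * B (- w))"
      using continuation[of w] continuation[of "- w"] by simp
  qed
qed

(* For Im p = \<sigma> r, the map w \<mapsto> p + w^2 sends the sector into the half-disc at p inside the strip. *)
definition sector :: "real \<Rightarrow> real \<Rightarrow> complex set" where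
  "sector \<sigma> \<delta> = {w. norm w < \<delta> \<and> 0 < Re w \<and> \<sigma> * Im w < 0}"

lemma open_sector: "open (sector \<sigma> \<delta>)"
  unfolding sector_def by (intro open_Collect_conj open_Collect_less continuous_intros)

lemma convex_sector: "convex (sector \<sigma> \<delta>)"
proof -
  have "sector \<sigma> \<delta> = ball 0 \<delta> \<inter> Re -` {0<..} \<inter> (\<lambda>w. \<sigma> * Im w) -` {..<0}"
    unfolding sector_def by auto
  moreover have "linear (\<lambda>w. \<sigma> * Im w)"
    by (intro bounded_linear.linear bounded_linear_mult_right bounded_linear_Im
        bounded_linear_compose[of "\<lambda>x. \<sigma> * x" Im])
  ultimately show ?thesis
    by (simp add: convex_Int convex_linear_vimage bounded_linear.linear[OF bounded_linear_Re])
qed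

lemma sector_subset_ball: "sector \<sigma> \<delta> \<subseteq> ball 0 \<delta>"
  by (auto simp: sector_def)

lemma square_of_sector:
  assumes "\<sigma> \<in> {-1, 1}" "w \<in> sector \<sigma> \<delta>"
  shows "w \<noteq> 0" "\<sigma> * Im (w\<^sup>2) < 0" "\<bar>Im (w\<^sup>2)\<bar> < \<delta>\<^sup>2"
proof -
  have w: "norm w < \<delta>" "0 < Re w" "\<sigma> * Im w < 0" using assms(2) by (auto simp: sector_def)
  then show "w \<noteq> 0" by auto
  have Im_sq: "Im (w\<^sup>2) = 2 * Re w * Im w" by (simp add: power2_eq_square)
  show "\<sigma> * Im (w\<^sup>2) < 0"
    unfolding Im_sq using mult_pos_neg[OF w(2) w(3)] by (simp add: ac_simps)
  have "\<bar>2 * Re w * Im w\<bar> \<le> (Re w)\<^sup>2 + (Im w)\<^sup>2"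
    using sum_squares_bound[of "Re w" "Im w"] sum_squares_bound[of "Re w" "- Im w"]
    by (simp add: abs_le_iff)
  also have "\<dots> = (norm w)\<^sup>2" by (simp add: cmod_power2)
  also have "\<dots> < \<delta>\<^sup>2" using w(1) by (simp add: power_strict_mono)
  finally show "\<bar>Im (w\<^sup>2)\<bar> < \<delta>\<^sup>2" unfolding Im_sq .
qed

lemma diagonal_in_sector:
  assumes "\<sigma> \<in> {-1, 1}" "0 < \<delta>" "0 < s" "s < \<delta>\<^sup>2"
  shows "complex_of_real (sqrt (s/2)) * (1 - \<i> * complex_of_real \<sigma>) \<in> sector \<sigma> \<delta>"
proof -
  have "norm (1 - \<i> * complex_of_real \<sigma>) = sqrt 2" using assms(1) by (auto simp: cmod_def)
  then have "norm (complex_of_real (sqrt (s/2)) * (1 - \<i> * complex_of_real \<sigma>)) = sqrt (s/2 * 2)"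
    using assms(3) unfolding norm_mult norm_of_real real_sqrt_mult by simp
  moreover have "sqrt s < \<delta>" using assms(2-4) by (simp add: real_less_lsqrt real_sqrt_less_iff)
  ultimately show ?thesis using assms(1,3) by (auto simp: sector_def)
qed

lemma diagonal_square:
  assumes "\<sigma> \<in> {-1, 1}" "0 \<le> s"
  shows "(complex_of_real (sqrt (s/2)) * (1 - \<i> * complex_of_real \<sigma>))\<^sup>2 = - \<i> * complex_of_real (\<sigma> * s)"
proof -
  have "(1 - \<i> * complex_of_real \<sigma>)\<^sup>2 = - 2 * \<i> * complex_of_real \<sigma>"
    using assms(1) by (auto simp: power2_eq_square complex_eq_iff)
  moreover have "(complex_of_real (sqrt (s/2)))\<^sup>2 = complex_of_real s / 2"
    using assms(2) by (simp add: power2_eq_square flip: of_real_mult)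
  ultimately show ?thesis by (simp add: power_mult_distrib)
qed

definition elliptic_radicand :: "real \<Rightarrow> complex \<Rightarrow> complex" where
  "elliptic_radicand k z = 1 - (complex_of_real k)\<^sup>2 * (sin z)\<^sup>2"

lemma cosh_less_of_abs_less_arcosh:
  fixes c y :: real
  assumes "1 \<le> c" "\<bar>y\<bar> < arcosh c"
  shows "cosh y < c"
proof -
  have "cosh \<bar>y\<bar> < cosh (arcosh c)"
    using assms by (intro cosh_real_strict_mono) auto
  then show ?thesis using assms(1) by simp
qed

lemma elliptic_radicand_not_nonpos_Reals:
  assumes "0 < k" "k < 1" "z \<in> strip (rho k)"
  shows "elliptic_radicand k z \<notin> \<real>\<^sub>\<le>\<^sub>0"
proof
  assume nonpos: "elliptic_radicand k z \<in> \<real>\<^sub>\<le>\<^sub>0"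
  define a b where "a = sin (Re z) * cosh (Im z)" and "b = cos (Re z) * sinh (Im z)"
  have sin_z: "sin z = Complex a b"
    by (simp add: complex_eq_iff Re_sin Im_sin a_def b_def cosh_def sinh_def)
  have "Im (elliptic_radicand k z) = - k\<^sup>2 * (2*a*b)"
    and "Re (elliptic_radicand k z) = 1 - k\<^sup>2 * (a\<^sup>2 - b\<^sup>2)"
    unfolding elliptic_radicand_def sin_z by (simp_all add: power2_eq_square)
  moreover have "Im (elliptic_radicand k z) = 0" "Re (elliptic_radicand k z) \<le> 0"
    using nonpos by (auto simp: complex_nonpos_Reals_iff)
  ultimately have ab: "a * b = 0" and le: "1 - k\<^sup>2 * (a\<^sup>2 - b\<^sup>2) \<le> 0"
    using assms by auto
  show False
  proof (cases "a = 0")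
    case True
    with le have "1 + k\<^sup>2 * b\<^sup>2 \<le> 0" by (simp add: algebra_simps)
    moreover have "0 \<le> k\<^sup>2 * b\<^sup>2" by simp
    ultimately show ?thesis by linarith
  next
    case False
    with ab have "b = 0" by simp
    have "cosh (Im z) < 1/k"
      using assms by (intro cosh_less_of_abs_less_arcosh) (auto simp: strip_def rho_def)
    moreover have "\<bar>a\<bar> \<le> cosh (Im z)"
      unfolding a_def abs_mult using abs_sin_le_one[of "Re z"] by (simp add: mult_left_le_one_le)
    ultimately have "\<bar>a\<bar> < 1/k" by linarith
    then have "k * \<bar>a\<bar> < 1" using assms by (simp add: field_simps)
    then have "(k * \<bar>a\<bar>)\<^sup>2 < 1" using assms by (simp add: abs_square_less_1)
    with le \<open>b = 0\<close> show ?thesis by (simp add: power_mult_distrib)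
  qed
qed

lemma open_strip: "open (strip r)"
  unfolding strip_def by (intro open_Collect_less continuous_intros)

lemma convex_strip: "convex (strip r)"
proof -
  have "strip r = Im -` {-r<..<r}" unfolding strip_def by auto
  then show ?thesis
    by (simp add: convex_linear_vimage bounded_linear.linear[OF bounded_linear_Im])
qed

lemma csqrt_elliptic_radicand_nonzero:
  assumes "0 < k" "k < 1" "z \<in> strip (rho k)"
  shows "csqrt (elliptic_radicand k z) \<noteq> 0"
  using elliptic_radicand_not_nonpos_Reals[OF assms] by (metis csqrt_eq_0 nonpos_Reals_zero_I)

lemma holomorphic_on_csqrt_elliptic_radicand:
  assumes "0 < k" "k < 1"
  shows "(\<lambda>z. csqrt (elliptic_radicand k z)) holomorphic_on strip (rho k)"
  using elliptic_radicand_not_nonpos_Reals[OF assms]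
  unfolding elliptic_radicand_def by (intro holomorphic_intros) auto

lemma elliptic_integrand_denominator_pos:
  fixes k t :: real
  assumes "\<bar>k\<bar> < 1"
  shows "0 < 1 - k\<^sup>2 * (sin t)\<^sup>2"
proof -
  have "k\<^sup>2 * (sin t)\<^sup>2 \<le> k\<^sup>2" by (simp add: abs_square_le_1 mult_left_le)
  moreover have "k\<^sup>2 < 1" using assms by (simp add: abs_square_less_1)
  ultimately show ?thesis by simp
qed

lemma csqrt_elliptic_radicand_of_real:
  assumes "\<bar>k\<bar> < 1"
  shows "csqrt (elliptic_radicand k (complex_of_real t)) = complex_of_real (sqrt (1 - k\<^sup>2 * (sin t)\<^sup>2))"
proof -
  have "elliptic_radicand k (complex_of_real t) = complex_of_real (1 - k\<^sup>2 * (sin t)\<^sup>2)"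
    by (simp add: elliptic_radicand_def sin_of_real)
  then show ?thesis
    using csqrt_of_real elliptic_integrand_denominator_pos[OF assms] less_imp_le by metis
qed

lemma ellK_pos:
  assumes "\<bar>k\<bar> < 1"
  shows "0 < ellK k"
proof -
  define h where "h t = 1 / sqrt (1 - k\<^sup>2 * (sin t)\<^sup>2)" for t
  have pos: "0 < 1 - k\<^sup>2 * (sin t)\<^sup>2" for t
    using elliptic_integrand_denominator_pos[OF assms] .
  have "1 \<le> h t" for t
    using pos[of t] unfolding h_def by (simp add: field_simps real_sqrt_le_1_iff)
  moreover have "h integrable_on {0..pi/2}"
    using pos unfolding h_def
    by (intro integrable_continuous_interval continuous_intros) (auto simp: less_imp_neq[symmetric])
  ultimately have "pi/2 \<le> integral {0..pi/2} h"
    using integral_le[of "\<lambda>_. 1" "{0..pi/2}" h] by fastforce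
  with pi_gt_zero have "0 < integral {0..pi/2} h" by linarith
  then show ?thesis unfolding ellK_def ellF_def h_def by simp
qed

lemma elliptic_radicand_vertical:
  assumes "cos x = 0"
  shows "elliptic_radicand k (complex_of_real x + \<i> * complex_of_real t) = complex_of_real (1 - k\<^sup>2 * (cosh t)\<^sup>2)"
proof -
  have "(sin x)\<^sup>2 = 1" using assms sin_cos_squared_add[of x] by simp
  moreover have "sin (complex_of_real x + \<i> * complex_of_real t) = complex_of_real (sin x * cosh t)"
    using assms by (simp add: complex_eq_iff Re_sin Im_sin cosh_def)
  ultimately show ?thesis
    by (simp add: elliptic_radicand_def power_mult_distrib flip: of_real_power)
qed

lemma vertical_denominator_pos:
  assumes "0 < k" "k < 1" "\<bar>t\<bar> < rho k"
  shows "0 < 1 - k\<^sup>2 * (cosh t)\<^sup>2"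
proof -
  have "cosh t < 1/k"
    using assms by (intro cosh_less_of_abs_less_arcosh) (auto simp: rho_def)
  then have "k * cosh t < 1" using assms by (simp add: field_simps)
  then have "(k * cosh t)\<^sup>2 < 1" using assms by (simp add: abs_square_less_1)
  then show ?thesis by (simp add: power_mult_distrib)
qed

lemma elliptic_radicand_branch_point:
  assumes "0 < k" "k < 1" "cos x = 0" "\<sigma> \<in> {-1, 1}"
    and p: "p = complex_of_real x + \<i> * complex_of_real (\<sigma> * rho k)"
  shows "elliptic_radicand k p = 0" "deriv (elliptic_radicand k) p \<noteq> 0"
proof -
  have "cosh (\<sigma> * rho k) = 1/k" using assms(1,2,4) by (auto simp: rho_def)
  then show zero: "elliptic_radicand k p = 0"
    using assms(1) unfolding p elliptic_radicand_vertical[OF assms(3)] by (simp add: power_divide)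
  have k_sq: "(complex_of_real k)\<^sup>2 \<noteq> 0" "(complex_of_real k)\<^sup>2 \<noteq> 1"
  proof -
    have "k\<^sup>2 < 1" using assms(1,2) by (simp add: power_less_one_iff)
    then show "(complex_of_real k)\<^sup>2 \<noteq> 1" by (metis of_real_power of_real_eq_1_iff less_irrefl)
  qed (use assms(1) in simp)
  have sin_sq: "(complex_of_real k)\<^sup>2 * (sin p)\<^sup>2 = 1"
    using zero by (simp add: elliptic_radicand_def)
  then have "sin p \<noteq> 0" by auto
  moreover have "cos p \<noteq> 0"
  proof
    assume "cos p = 0"
    then have "(sin p)\<^sup>2 = 1" using sin_cos_squared_add[of p] by simp
    with sin_sq k_sq(2) show False by simp
  qed
  moreover have "(elliptic_radicand k has_field_derivative
      - ((complex_of_real k)\<^sup>2 * (2 * sin p * cos p))) (at p)"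
    unfolding elliptic_radicand_def[abs_def]
    by (auto intro!: derivative_eq_intros simp: power2_eq_square)
  ultimately show "deriv (elliptic_radicand k) p \<noteq> 0"
    using k_sq(1) by (simp add: DERIV_imp_deriv)
qed

lemma branch_point_plus_sector_in_strip:
  assumes "\<sigma> \<in> {-1, 1}" "Im p = \<sigma> * r" "\<delta>\<^sup>2 \<le> r" "w \<in> sector \<sigma> \<delta>"
  shows "p + w\<^sup>2 \<in> strip r"
  using square_of_sector(2,3)[OF assms(1,4)] assms(1-3) by (auto simp: strip_def abs_less_iff)

lemma csqrt_elliptic_radicand_uniformized:
  assumes k: "0 < k" "k < 1" and "cos x = 0" and \<sigma>: "\<sigma> \<in> {-1, 1}"
    and p: "p = complex_of_real x + \<i> * complex_of_real (\<sigma> * rho k)" and "0 < \<delta>\<^sub>0"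
  obtains \<delta> \<epsilon> S where "0 < \<delta>" "\<delta> \<le> \<delta>\<^sub>0" "\<epsilon> \<noteq> 0"
    "S holomorphic_on ball 0 \<delta>" "\<And>w. w \<in> ball 0 \<delta> \<Longrightarrow> S w \<noteq> 0"
    "\<And>w. w \<in> sector \<sigma> \<delta> \<Longrightarrow> p + w\<^sup>2 \<in> strip (rho k)"
    "\<And>w. w \<in> sector \<sigma> \<delta> \<Longrightarrow> csqrt (elliptic_radicand k (p + w\<^sup>2)) = \<epsilon> * w * S w"
proof -
  have "elliptic_radicand k holomorphic_on UNIV"
    unfolding elliptic_radicand_def by (intro holomorphic_intros)
  then obtain \<delta>\<^sub>1 S where "0 < \<delta>\<^sub>1" and S: "S holomorphic_on ball 0 \<delta>\<^sub>1"
      and S_nonzero: "\<And>w. w \<in> ball 0 \<delta>\<^sub>1 \<Longrightarrow> S w \<noteq> 0"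
      and radicand_eq: "\<And>w. w \<in> ball 0 \<delta>\<^sub>1 \<Longrightarrow> elliptic_radicand k (p + w\<^sup>2) = (w * S w)\<^sup>2"
    using entire_simple_zero_square_root elliptic_radicand_branch_point[OF k assms(3) \<sigma> p] by metis
  define \<delta> where "\<delta> = min \<delta>\<^sub>0 (min \<delta>\<^sub>1 (sqrt (rho k)))"
  have "0 < rho k" using k by (simp add: rho_def)
  then have \<delta>: "0 < \<delta>" "\<delta> \<le> \<delta>\<^sub>0" "ball 0 \<delta> \<subseteq> ball 0 \<delta>\<^sub>1" "\<delta> \<le> sqrt (rho k)"
    using \<open>0 < \<delta>\<^sub>0\<close> \<open>0 < \<delta>\<^sub>1\<close> unfolding \<delta>_def by auto
  then have "\<delta>\<^sup>2 \<le> rho k"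
    using power_mono[OF \<delta>(4), of 2] \<open>0 < rho k\<close> by simp
  then have in_strip: "p + w\<^sup>2 \<in> strip (rho k)" if "w \<in> sector \<sigma> \<delta>" for w
    using branch_point_plus_sector_in_strip[OF \<sigma> _ _ that] p by simp
  have in_ball: "w \<in> ball 0 \<delta>\<^sub>1" "w \<noteq> 0" if "w \<in> sector \<sigma> \<delta>" for w
    using that \<delta>(3) sector_subset_ball[of \<sigma> \<delta>] square_of_sector(1)[OF \<sigma>] by auto
  define q where "q w = csqrt (elliptic_radicand k (p + w\<^sup>2)) / (w * S w)" for w
  have "(q w)\<^sup>2 = 1" if "w \<in> sector \<sigma> \<delta>" for w
    using radicand_eq[OF in_ball(1)[OF that]] S_nonzero[OF in_ball(1)[OF that]] in_ball(2)[OF that]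
    by (simp add: q_def power_divide)
  moreover have "q holomorphic_on sector \<sigma> \<delta>"
    unfolding q_def elliptic_radicand_def using in_strip elliptic_radicand_not_nonpos_Reals[OF k] S_nonzero in_ball
    by (intro holomorphic_intros holomorphic_on_subset[OF S]) (auto simp: elliptic_radicand_def)
  ultimately obtain \<epsilon> where \<epsilon>: "\<epsilon> \<in> {-1, 1}" "\<And>w. w \<in> sector \<sigma> \<delta> \<Longrightarrow> q w = \<epsilon>"
    using continuous_square_eq_1_constant[OF convex_connected[OF convex_sector]]
      holomorphic_on_imp_continuous_on by metis
  show ?thesis
  proof (rule that[OF \<delta>(1,2) _ holomorphic_on_subset[OF S \<delta>(3)] _ in_strip])
    show "\<epsilon> \<noteq> 0" using \<epsilon>(1) by auto
    show "S w \<noteq> 0" if "w \<in> ball 0 \<delta>" for w using S_nonzero \<delta>(3) that by blast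
    fix w assume "w \<in> sector \<sigma> \<delta>"
    with \<epsilon>(2)[of w] S_nonzero in_ball show "csqrt (elliptic_radicand k (p + w\<^sup>2)) = \<epsilon> * w * S w"
      by (auto simp: q_def field_simps)
  qed
qed

lemma cos_pi_half_plus_int_pi: "cos (pi / 2 + pi * real_of_int n) = 0"
  by (simp add: cos_add)

locale elliptic_primitive =
  fixes k :: real and F :: "complex \<Rightarrow> complex"
  assumes modulus_pos: "0 < k" and modulus_less_1: "k < 1"
    and has_field_derivative:
      "\<And>z. z \<in> strip (rho k) \<Longrightarrow> (F has_field_derivative 1 / csqrt (elliptic_radicand k z)) (at z)"
    and at_0: "F 0 = 0"

lemma elliptic_primitive_exists:
  assumes "0 < k" "k < 1"
  obtains F where "elliptic_primitive k F"
proof -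
  have "(\<lambda>z. 1 / csqrt (elliptic_radicand k z)) holomorphic_on strip (rho k)"
    using assms csqrt_elliptic_radicand_nonzero
    by (intro holomorphic_intros holomorphic_on_csqrt_elliptic_radicand) auto
  then obtain G where G: "\<And>z. z \<in> strip (rho k) \<Longrightarrow>
      (G has_field_derivative 1 / csqrt (elliptic_radicand k z)) (at z within strip (rho k))"
    using holomorphic_convex_primitive'[OF convex_strip open_strip] by blast
  have "elliptic_primitive k (\<lambda>z. G z - G 0)"
  proof
    fix z assume "z \<in> strip (rho k)"
    with G show "((\<lambda>z. G z - G 0) has_field_derivative 1 / csqrt (elliptic_radicand k z)) (at z)"
      by (auto simp: at_within_open[OF _ open_strip] intro!: derivative_eq_intros)
  qed (use assms in auto)
  then show ?thesis using that by blast
qed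

context elliptic_primitive
begin

lemma rho_pos: "0 < rho k"
  using modulus_pos modulus_less_1 by (simp add: rho_def)

lemma of_real_in_strip: "complex_of_real x \<in> strip (rho k)"
  using rho_pos by (simp add: strip_def)

lemma holomorphic_on_strip: "F holomorphic_on strip (rho k)"
  using has_field_derivative by (auto simp: holomorphic_on_open[OF open_strip])

lemma of_real_eq_ellF: "F (complex_of_real x) = complex_of_real (ellF k x)"
proof -
  have k: "\<bar>k\<bar> < 1" using modulus_pos modulus_less_1 by simp
  define h where "h t = 1 / sqrt (1 - k\<^sup>2 * (sin t)\<^sup>2)" for t
  have "((\<lambda>t. F (complex_of_real t)) has_vector_derivative complex_of_real (h t)) (at t within X)" for t X
    using has_vector_derivative_real_field[OF has_field_derivative[OF of_real_in_strip]]
    by (simp add: csqrt_elliptic_radicand_of_real[OF k] h_def)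
  then have FTC: "((\<lambda>t. complex_of_real (h t)) has_integral (F b - F a)) {a..b}" if "a \<le> b" for a b
    using that by (intro fundamental_theorem_of_calculus) auto
  have "h integrable_on {a..b}" for a b
    using elliptic_integrand_denominator_pos[OF k] unfolding h_def
    by (intro integrable_continuous_interval continuous_intros) (auto simp: less_imp_neq[symmetric])
  then have "F b - F a = complex_of_real (integral {a..b} h)" if "a \<le> b" for a b
    using has_integral_unique[OF FTC[OF that] has_integral_of_real] by blast
  from this[of 0 x] this[of x 0] show ?thesis
    using at_0 unfolding ellF_def h_def by (cases "0 \<le> x") (auto, metis minus_minus)
qed

lemma Im_vertical_has_real_derivative:
  assumes "cos x = 0" "\<bar>t\<bar> < rho k"
  shows "((\<lambda>t. Im (F (complex_of_real x + \<i> * complex_of_real t))) has_real_derivative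
           1 / sqrt (1 - k\<^sup>2 * (cosh t)\<^sup>2)) (at t)"
proof -
  define z where "z = complex_of_real x + \<i> * complex_of_real t"
  have "z \<in> strip (rho k)" using assms(2) by (simp add: strip_def z_def)
  then have "((\<lambda>w. F (complex_of_real x + \<i> * w)) has_field_derivative
      1 / csqrt (elliptic_radicand k z) * \<i>) (at (complex_of_real t))"
    unfolding z_def
    by (rule DERIV_chain2[OF has_field_derivative]) (auto intro!: derivative_eq_intros)
  moreover have "1 / csqrt (elliptic_radicand k z) = complex_of_real (1 / sqrt (1 - k\<^sup>2 * (cosh t)\<^sup>2))"
    using vertical_denominator_pos[OF modulus_pos modulus_less_1 assms(2)]
    by (simp add: z_def elliptic_radicand_vertical[OF assms(1)])
  ultimately have "((\<lambda>w. F (complex_of_real x + \<i> * w)) has_field_derivative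
      complex_of_real (1 / sqrt (1 - k\<^sup>2 * (cosh t)\<^sup>2)) * \<i>) (at (complex_of_real t))"
    by simp
  from has_field_derivative_Im[OF has_vector_derivative_real_field[OF this]] show ?thesis
    by simp
qed

lemma Im_vertical_strict_mono:
  assumes "cos x = 0"
  shows "strict_mono_on {-rho k<..<rho k} (\<lambda>t. Im (F (complex_of_real x + \<i> * complex_of_real t)))"
proof (rule strict_mono_onI)
  fix a b assume "a \<in> {-rho k<..<rho k}" "b \<in> {-rho k<..<rho k}" "a < b"
  then show "Im (F (complex_of_real x + \<i> * complex_of_real a)) < Im (F (complex_of_real x + \<i> * complex_of_real b))"
    using Im_vertical_has_real_derivative[OF assms] vertical_denominator_pos[OF modulus_pos modulus_less_1]
    by (intro DERIV_pos_imp_increasing[OF \<open>a < b\<close>]) force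
qed

lemma Im_at_branch_point_pos:
  assumes x: "cos x = 0" and \<sigma>: "\<sigma> \<in> {-1, 1}"
    and p: "p = complex_of_real x + \<i> * complex_of_real (\<sigma> * rho k)"
    and "0 < \<delta>" "isCont \<Phi> 0" and \<Phi>: "\<And>w. w \<in> sector \<sigma> \<delta> \<Longrightarrow> \<Phi> w = F (p + w\<^sup>2)"
  shows "0 < \<sigma> * Im (\<Phi> 0)"
proof -
  define \<psi> where "\<psi> t = Im (F (complex_of_real x + \<i> * complex_of_real t))" for t
  have \<psi>_le: "\<psi> a \<le> \<psi> b" if "-rho k < a" "a \<le> b" "b < rho k" for a b
    using strict_mono_on_leD[OF Im_vertical_strict_mono[OF x]] that by (auto simp: \<psi>_def)
  have \<psi>_0: "\<psi> 0 = 0" using of_real_eq_ellF[of x] by (simp add: \<psi>_def)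
  define c where "c = \<sigma> * \<psi> (\<sigma> * rho k / 2)"
  have "0 < c"
    using \<sigma> rho_pos \<psi>_0 strict_mono_onD[OF Im_vertical_strict_mono[OF x], of 0 "rho k / 2"]
      strict_mono_onD[OF Im_vertical_strict_mono[OF x], of "- rho k / 2" 0]
    by (auto simp: c_def \<psi>_def)
  define ws where "ws s = complex_of_real (sqrt (s/2)) * (1 - \<i> * complex_of_real \<sigma>)" for s
  define s\<^sub>0 where "s\<^sub>0 = min (rho k / 2) (\<delta>\<^sup>2)"
  have "c \<le> \<sigma> * Im (\<Phi> (ws s))" if "0 < s" "s < s\<^sub>0" for s
  proof -
    have "\<Phi> (ws s) = F (complex_of_real x + \<i> * complex_of_real (\<sigma> * (rho k - s)))"
      using that \<Phi> diagonal_in_sector[OF \<sigma> \<open>0 < \<delta>\<close>] diagonal_square[OF \<sigma>]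
      by (simp add: ws_def s\<^sub>0_def p algebra_simps)
    moreover have "rho k / 2 \<le> rho k - s" "rho k - s < rho k" using that by (auto simp: s\<^sub>0_def)
    ultimately show ?thesis
      using \<sigma> \<psi>_le[of "rho k / 2" "rho k - s"] \<psi>_le[of "- (rho k - s)" "- rho k / 2"] rho_pos
      by (auto simp: c_def \<psi>_def)
  qed
  then have "\<forall>\<^sub>F s in at_right 0. c \<le> \<sigma> * Im (\<Phi> (ws s))"
    unfolding eventually_at_right_field using rho_pos \<open>0 < \<delta>\<close>
    by (intro exI[of _ s\<^sub>0]) (auto simp: s\<^sub>0_def)
  moreover have "(ws \<longlongrightarrow> 0) (at_right 0)"
    unfolding ws_def by (auto intro!: tendsto_eq_intros)
  then have "((\<lambda>s. \<sigma> * Im (\<Phi> (ws s))) \<longlongrightarrow> \<sigma> * Im (\<Phi> 0)) (at_right 0)"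
    by (intro tendsto_intros isCont_tendsto_compose[OF \<open>isCont \<Phi> 0\<close>])
  ultimately have "c \<le> \<sigma> * Im (\<Phi> 0)"
    by (intro tendsto_lowerbound) auto
  with \<open>0 < c\<close> show ?thesis by simp
qed

lemma holomorphic_on_quotient:
  assumes "T holomorphic_on UNIV"
  shows "(\<lambda>z. T (c * F z) / csqrt (elliptic_radicand k z)) holomorphic_on strip (rho k)"
proof -
  have "(\<lambda>z. c * F z) holomorphic_on strip (rho k)"
    by (intro holomorphic_intros holomorphic_on_strip)
  from holomorphic_on_compose_gen[OF this assms] show ?thesis
    using csqrt_elliptic_radicand_nonzero[OF modulus_pos modulus_less_1]
    by (auto simp: o_def intro!: holomorphic_intros
        holomorphic_on_csqrt_elliptic_radicand[OF modulus_pos modulus_less_1])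
qed

lemma primitive_uniformized_at_branch_point:
  assumes x: "cos x = 0" and \<sigma>: "\<sigma> \<in> {-1, 1}"
    and p: "p = complex_of_real x + \<i> * complex_of_real (\<sigma> * rho k)" and "0 < \<delta>\<^sub>0"
  obtains \<delta> \<epsilon> S \<Phi> where "0 < \<delta>" "\<delta> \<le> \<delta>\<^sub>0" "\<epsilon> \<noteq> 0"
    "S holomorphic_on ball 0 \<delta>" "\<And>w. w \<in> ball 0 \<delta> \<Longrightarrow> S w \<noteq> 0" "\<Phi> holomorphic_on ball 0 \<delta>"
    "\<And>w. w \<in> sector \<sigma> \<delta> \<Longrightarrow> p + w\<^sup>2 \<in> strip (rho k)"
    "\<And>w. w \<in> sector \<sigma> \<delta> \<Longrightarrow> csqrt (elliptic_radicand k (p + w\<^sup>2)) = \<epsilon> * w * S w"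
    "\<And>w. w \<in> sector \<sigma> \<delta> \<Longrightarrow> \<Phi> w = F (p + w\<^sup>2)"
proof -
  obtain \<delta> \<epsilon> S where \<delta>: "0 < \<delta>" "\<delta> \<le> \<delta>\<^sub>0" and "\<epsilon> \<noteq> 0"
    and S: "S holomorphic_on ball 0 \<delta>" "\<And>w. w \<in> ball 0 \<delta> \<Longrightarrow> S w \<noteq> 0"
    and in_strip: "\<And>w. w \<in> sector \<sigma> \<delta> \<Longrightarrow> p + w\<^sup>2 \<in> strip (rho k)"
    and csqrt_eq: "\<And>w. w \<in> sector \<sigma> \<delta> \<Longrightarrow> csqrt (elliptic_radicand k (p + w\<^sup>2)) = \<epsilon> * w * S w"
    using csqrt_elliptic_radicand_uniformized[OF modulus_pos modulus_less_1 x \<sigma> p \<open>0 < \<delta>\<^sub>0\<close>] by blast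
  have "((\<lambda>w. F (p + w\<^sup>2)) has_field_derivative 2 / (\<epsilon> * S w)) (at w)" if "w \<in> sector \<sigma> \<delta>" for w
  proof -
    have "((\<lambda>w. F (p + w\<^sup>2)) has_field_derivative
        1 / csqrt (elliptic_radicand k (p + w\<^sup>2)) * (2 * w)) (at w)"
      by (rule DERIV_chain2[where g = "\<lambda>w. p + w\<^sup>2", OF has_field_derivative[OF in_strip[OF that]]])
        (auto intro!: derivative_eq_intros)
    moreover have "w \<noteq> 0" "S w \<noteq> 0"
      using square_of_sector(1)[OF \<sigma> that] S(2) sector_subset_ball[of \<sigma> \<delta>] that by auto
    ultimately show ?thesis
      using \<open>\<epsilon> \<noteq> 0\<close> unfolding csqrt_eq[OF that] by (simp add: divide_simps)
  qed
  moreover have "(\<lambda>w. 2 / (\<epsilon> * S w)) holomorphic_on ball 0 \<delta>"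
    using S \<open>\<epsilon> \<noteq> 0\<close> by (intro holomorphic_intros) auto
  ultimately obtain \<Phi> where "\<Phi> holomorphic_on ball 0 \<delta>" "\<And>w. w \<in> sector \<sigma> \<delta> \<Longrightarrow> \<Phi> w = F (p + w\<^sup>2)"
    using holomorphic_primitive_extends[OF _ open_ball convex_ball convex_sector sector_subset_ball]
    by blast
  with that \<delta> \<open>\<epsilon> \<noteq> 0\<close> S in_strip csqrt_eq show ?thesis by blast
qed

lemma no_isolated_singularity_at_branch_point:
  fixes T h :: "complex \<Rightarrow> complex"
  assumes T: "T holomorphic_on UNIV" and T_zeros: "\<And>z. T z = 0 \<Longrightarrow> Im z = 0" and "\<alpha> \<noteq> 0"
    and x: "cos x = 0" and \<sigma>: "\<sigma> \<in> {-1, 1}"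
    and p: "p = complex_of_real x + \<i> * complex_of_real (\<sigma> * rho k)"
    and "0 < r" and h: "h holomorphic_on ball p r - {p}"
    and h_eq: "\<And>z. z \<in> ball p r \<inter> strip (rho k) \<Longrightarrow>
      h z = T (complex_of_real \<alpha> * F z) / csqrt (elliptic_radicand k z)"
  shows False
proof -
  obtain \<delta> \<epsilon> S \<Phi> where \<delta>: "0 < \<delta>" "\<delta> \<le> sqrt r" and "\<epsilon> \<noteq> 0"
    and S: "S holomorphic_on ball 0 \<delta>" "\<And>w. w \<in> ball 0 \<delta> \<Longrightarrow> S w \<noteq> 0"
    and \<Phi>_hol: "\<Phi> holomorphic_on ball 0 \<delta>"
    and in_strip: "\<And>w. w \<in> sector \<sigma> \<delta> \<Longrightarrow> p + w\<^sup>2 \<in> strip (rho k)"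
    and csqrt_eq: "\<And>w. w \<in> sector \<sigma> \<delta> \<Longrightarrow> csqrt (elliptic_radicand k (p + w\<^sup>2)) = \<epsilon> * w * S w"
    and \<Phi>_eq: "\<And>w. w \<in> sector \<sigma> \<delta> \<Longrightarrow> \<Phi> w = F (p + w\<^sup>2)"
    using primitive_uniformized_at_branch_point[OF x \<sigma> p real_sqrt_gt_zero[OF \<open>0 < r\<close>]] by blast
  have in_ball: "p + w\<^sup>2 \<in> ball p r" if "w \<in> ball 0 \<delta>" for w
  proof -
    have "norm w ^ 2 < (sqrt r)\<^sup>2" using that \<delta> by (intro power_strict_mono) auto
    with \<open>0 < r\<close> show ?thesis by (simp add: dist_norm norm_power)
  qed
  have "(\<lambda>w. complex_of_real \<alpha> * \<Phi> w) holomorphic_on ball 0 \<delta>"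
    using \<Phi>_hol by (intro holomorphic_intros)
  from holomorphic_on_compose_gen[OF this T]
  have "(\<lambda>w. T (complex_of_real \<alpha> * \<Phi> w)) holomorphic_on ball 0 \<delta>" by (simp add: o_def)
  then have "T (complex_of_real \<alpha> * \<Phi> 0) = 0"
  proof (rule pullback_by_square_numerator_vanishes[OF _ _ _ h in_ball open_sector])
    show "(\<lambda>w. \<epsilon> * S w) holomorphic_on ball 0 \<delta>" using S(1) by (intro holomorphic_intros)
    show "sector \<sigma> \<delta> \<noteq> {}"
      using diagonal_in_sector[OF \<sigma> \<delta>(1), of "\<delta>\<^sup>2/2"] \<delta>(1) by auto
    show "sector \<sigma> \<delta> \<subseteq> ball 0 \<delta> - {0}"
      using sector_subset_ball square_of_sector(1)[OF \<sigma>] by blast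
    fix w assume "w \<in> sector \<sigma> \<delta>"
    with h_eq[of "p + w\<^sup>2"] in_strip in_ball sector_subset_ball[of \<sigma> \<delta>] \<Phi>_eq csqrt_eq
    show "T (complex_of_real \<alpha> * \<Phi> w) / (w * (\<epsilon> * S w)) = h (p + w\<^sup>2)"
      by (auto simp: ac_simps)
  qed (use S(2) \<open>\<epsilon> \<noteq> 0\<close> in auto)
  then have "Im (complex_of_real \<alpha> * \<Phi> 0) = 0" by (rule T_zeros)
  with \<open>\<alpha> \<noteq> 0\<close> have "Im (\<Phi> 0) = 0" by simp
  moreover have "isCont \<Phi> 0"
    using holomorphic_on_imp_continuous_on[OF \<Phi>_hol] \<delta>(1) by (simp add: continuous_on_eq_continuous_at)
  then have "0 < \<sigma> * Im (\<Phi> 0)"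
    using Im_at_branch_point_pos[OF x \<sigma> p \<delta>(1) _ \<Phi>_eq] by blast
  ultimately show False by simp
qed

lemma no_isolated_singularity_at_pi_half_plus_int_pi:
  assumes "T \<in> {cos, sin}" "\<alpha> \<noteq> 0"
    and p_mem: "p \<in> {complex_of_real (pi / 2 + pi * real_of_int n) + \<i> * complex_of_real (rho k),
        complex_of_real (pi / 2 + pi * real_of_int n) - \<i> * complex_of_real (rho k)}"
  shows "\<not> (\<exists>r>0. \<exists>h. h holomorphic_on ball p r - {p} \<and>
    (\<forall>z\<in>ball p r \<inter> strip (rho k). h z = T (complex_of_real \<alpha> * F z) / csqrt (elliptic_radicand k z)))"
proof clarify
  fix r h assume "0 < r" "h holomorphic_on ball p r - {p}"
    and h_eq: "\<forall>z\<in>ball p r \<inter> strip (rho k). h z = T (complex_of_real \<alpha> * F z) / csqrt (elliptic_radicand k z)"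
  obtain \<sigma> :: real where \<sigma>: "\<sigma> \<in> {-1, 1}"
    and p: "p = complex_of_real (pi / 2 + pi * real_of_int n) + \<i> * complex_of_real (\<sigma> * rho k)"
  proof (cases "p = complex_of_real (pi / 2 + pi * real_of_int n) + \<i> * complex_of_real (rho k)")
    case True
    then show ?thesis using that[of 1] by simp
  next
    case False
    then show ?thesis using that[of "-1"] p_mem by simp
  qed
  show False
    by (rule no_isolated_singularity_at_branch_point[OF _ _ \<open>\<alpha> \<noteq> 0\<close> cos_pi_half_plus_int_pi \<sigma> p
          \<open>0 < r\<close> \<open>h holomorphic_on ball p r - {p}\<close>, of T])
      (use assms(1) h_eq in \<open>auto simp: cos_eq_0 sin_eq_0 holomorphic_on_cos holomorphic_on_sin\<close>)
qed

end

lemma k_lam_bounds: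
  assumes "0 < lam" "lam < b" "b < a"
  shows "0 < k_lam a b lam" "k_lam a b lam < 1"
proof -
  have "lam\<^sup>2 < b\<^sup>2" "b\<^sup>2 < a\<^sup>2"
    using assms by (simp_all add: power_strict_mono)
  then have "0 < (a\<^sup>2 - b\<^sup>2) / (a\<^sup>2 - lam\<^sup>2)" "(a\<^sup>2 - b\<^sup>2) / (a\<^sup>2 - lam\<^sup>2) < 1"
    by (simp_all add: field_simps)
  then show "0 < k_lam a b lam" "k_lam a b lam < 1"
    by (simp_all add: k_lam_def real_sqrt_lt_1_iff)
qed

(* The hypotheses on q and omega only single out the modulus k_q; the argument works for every
   modulus in (0,1) and every q \<ge> 1. *)
theorem proposition4:
  fixes a b lam :: real and q :: nat
  assumes "0 < b" and "b < a" and "3 \<le> q"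
    and "0 < lam" and "lam < b" and "omega a b lam = 1 / real q"
  shows "\<exists>f g. f holomorphic_on strip (rho (k_lam a b lam))
           \<and> g holomorphic_on strip (rho (k_lam a b lam))
           \<and> (\<forall>x::real. f (complex_of_real x) = complex_of_real (cq (k_lam a b lam) q x))
           \<and> (\<forall>x::real. g (complex_of_real x) = complex_of_real (sq (k_lam a b lam) q x))
           \<and> (\<forall>(n::int) p. p \<in> {complex_of_real (pi / 2 + pi * real_of_int n) + \<i> * complex_of_real (rho (k_lam a b lam)),
                                complex_of_real (pi / 2 + pi * real_of_int n) - \<i> * complex_of_real (rho (k_lam a b lam))} \<longrightarrow>
                \<not> (\<exists>r>0. \<exists>h. h holomorphic_on (ball p r - {p})
                         \<and> (\<forall>z\<in>ball p r \<inter> strip (rho (k_lam a b lam)). h z = f z))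
              \<and> \<not> (\<exists>r>0. \<exists>h. h holomorphic_on (ball p r - {p})
                         \<and> (\<forall>z\<in>ball p r \<inter> strip (rho (k_lam a b lam)). h z = g z)))"
proof -
  define k where "k = k_lam a b lam"
  have k: "0 < k" "k < 1" using k_lam_bounds assms(2,4,5) by (simp_all add: k_def)
  then obtain F where "elliptic_primitive k F" using elliptic_primitive_exists by blast
  then interpret elliptic_primitive k F .
  define \<alpha> where "\<alpha> = 2 * pi * real q / (4 * ellK k)"
  have "\<alpha> \<noteq> 0" using ellK_pos[of k] k assms(3) by (simp add: \<alpha>_def)
  define f g where "f z = cos (complex_of_real \<alpha> * F z) / csqrt (elliptic_radicand k z)"
    and "g z = sin (complex_of_real \<alpha> * F z) / csqrt (elliptic_radicand k z)" for z
  have "f (complex_of_real x) = complex_of_real (cq k q x)" "g (complex_of_real x) = complex_of_real (sq k q x)" for x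
    using k by (simp_all add: f_def g_def cq_def sq_def \<alpha>_def of_real_eq_ellF csqrt_elliptic_radicand_of_real
        flip: cos_of_real sin_of_real)
  moreover note no_isolated_singularity_at_pi_half_plus_int_pi[OF _ \<open>\<alpha> \<noteq> 0\<close>]
  ultimately show ?thesis unfolding k_def[symmetric]
    by (intro exI[of _ f] exI[of _ g] conjI allI impI)
      (auto simp: f_def[abs_def] g_def[abs_def] intro!: holomorphic_on_quotient holomorphic_intros)
qed

end
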